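(* For any simple graph $G$ and any integer $k \geq 1$, $2\alpha'_k(G) \geq k|V(G)| - \phi_k(G)$.
   Context: $\alpha'_k(G)$ is the maximum number of edges of a $k$-edge-colorable subgraph of $G$. For $D\subseteq V(G)$, $\phi_k(D)=k|D|-|E(G[D])|$ and $\phi_k(G)=\max_{D\subseteq V(G)}\phi_k(D)$. *)

theory Defs
  imports Main
begin

definition simple_graph :: "'a set \<Rightarrow> 'a set set \<Rightarrow> bool" where
  "simple_graph V E \<longleftrightarrow> finite V \<and>
     (\<forall>e\<in>E. \<exists>u v. e = {u, v} \<and> u \<noteq> v \<and> u \<in> V \<and> v \<in> V)"

definition k_edge_colorable :: "nat \<Rightarrow> 'a set set \<Rightarrow> bool" where
  "k_edge_colorable k F \<longleftrightarrow> (\<exists>c :: 'a set \<Rightarrow> nat.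
     (\<forall>e\<in>F. c e < k) \<and>
     (\<forall>e\<in>F. \<forall>f\<in>F. e \<noteq> f \<and> e \<inter> f \<noteq> {} \<longrightarrow> c e \<noteq> c f))"

text \<open>alpha'_k(G): maximum number of edges of a k-edge-colourable subgraph of G
  (a subgraph's edges form a subset F of E; vertices are irrelevant to the count).\<close>
definition alpha_k :: "nat \<Rightarrow> 'a set set \<Rightarrow> nat" where
  "alpha_k k E = Max {card F | F. F \<subseteq> E \<and> k_edge_colorable k F}"

definition induced_edges :: "'a set set \<Rightarrow> 'a set \<Rightarrow> 'a set set" where
  "induced_edges E D = {e \<in> E. e \<subseteq> D}"

definition phi_set :: "nat \<Rightarrow> 'a set set \<Rightarrow> 'a set \<Rightarrow> int" where
  "phi_set k E D = int k * int (card D) - int (card (induced_edges E D))"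

definition phi_graph :: "nat \<Rightarrow> 'a set \<Rightarrow> 'a set set \<Rightarrow> int" where
  "phi_graph k V E = Max (phi_set k E ` Pow V)"

end

theory Submission
  imports Defs "HOL-Combinatorics.Transposition"
begin

text \<open>Fix a maximum \<open>k\<close>-edge-colourable subgraph \<open>H\<close> of \<open>G\<close> with a proper colouring, and let \<open>D\<close>
  be the set of vertices whose \<open>H\<close>-degree is less than \<open>k\<close>. Vertices outside \<open>D\<close> have
  \<open>H\<close>-degree exactly \<open>k\<close>, so \<open>2|H|\<close> is \<open>k|V - D|\<close> plus the \<open>H\<close>-degree sum \<open>\<sigma>\<close> over \<open>D\<close>.
  The edges of \<open>H\<close> inside \<open>D\<close> number at most \<open>\<sigma>/2\<close>. So do the edges of \<open>G[D]\<close> outside \<open>H\<close>: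
  at each \<open>v \<in> D\<close> they are charged injectively to colours used at \<open>v\<close>, namely to a colour free
  at their other end. That colour is used at \<open>v\<close>, since otherwise the edge could be added to \<open>H\<close>;
  and two other ends with a common free colour \<open>a\<close>, together with a colour \<open>b\<close> free at \<open>v\<close>,
  would be three ends of the \<open>a\<close>/\<open>b\<close> Kempe chain through \<open>v\<close>, which is a path or a cycle.
  Hence \<open>|E(G[D])| \<le> \<sigma>\<close>, i.e. \<open>2|H| \<ge> k|V| - (k|D| - |E(G[D])|) \<ge> k|V| - \<phi>\<^sub>k(G)\<close>.\<close>

definition degree :: "'a set set \<Rightarrow> 'a \<Rightarrow> nat" where
  "degree F v = card {e \<in> F. v \<in> e}"

lemma degree_mono: "F \<subseteq> F' \<Longrightarrow> finite F' \<Longrightarrow> degree F v \<le> degree F' v"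
  unfolding degree_def by (rule card_mono) auto

lemma sum_degree:
  assumes "finite D" and "\<And>e. e \<in> F \<Longrightarrow> card e = 2 \<and> e \<subseteq> D"
  shows "(\<Sum>v\<in>D. degree F v) = 2 * card F"
proof -
  have "finite F"
    using assms by (intro finite_subset[of F "Pow D"]) auto
  have "(\<Sum>v\<in>D. degree F v) = (\<Sum>v\<in>D. \<Sum>e\<in>F. if v \<in> e then 1 else 0)"
    using \<open>finite F\<close> by (simp add: degree_def sum.inter_filter[symmetric])
  also have "\<dots> = (\<Sum>e\<in>F. \<Sum>v\<in>D. if v \<in> e then 1 else 0)"
    by (rule sum.swap)
  also have "\<dots> = (\<Sum>e\<in>F. card {v \<in> D. v \<in> e})"
    using assms(1) by (simp add: sum.inter_filter[symmetric])
  also have "\<dots> = (\<Sum>e\<in>F. 2)"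
  proof (rule sum.cong)
    fix e assume "e \<in> F"
    then have "{v \<in> D. v \<in> e} = e" "card e = 2" using assms(2) by auto
    then show "card {v \<in> D. v \<in> e} = 2" by simp
  qed simp
  finally show ?thesis by simp
qed

lemma rtrancl_avoiding_leaf:
  assumes "R `` {x} = {y}" and "(x, z) \<in> R\<^sup>*" and "z \<noteq> x"
  shows "(y, z) \<in> {(p, q) \<in> R. p \<noteq> x \<and> q \<noteq> x}\<^sup>*"
  using assms(2,3)
proof (induction rule: rtrancl_induct)
  case (step z w)
  show ?case
  proof (cases "z = x")
    case True
    with step.hyps(2) assms(1) show ?thesis by auto
  next
    case False
    with step show ?thesis by (auto intro: rtrancl_into_rtrancl)
  qed
qed simp

text \<open>Every connected component of a graph of maximum degree two is a path or a cycle,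
  so it has at most two vertices of degree at most one.\<close>
lemma no_three_ends_in_component:
  assumes "finite R" "sym R" "irrefl R" "\<And>p. card (R `` {p}) \<le> 2"
    and "card (R `` {x}) \<le> 1" "card (R `` {y1}) \<le> 1" "card (R `` {y2}) \<le> 1"
    and "(x, y1) \<in> R\<^sup>*" "(x, y2) \<in> R\<^sup>*" "distinct [x, y1, y2]"
  shows False
  using assms
proof (induction "card R" arbitrary: R x y1 y2 rule: less_induct)
  case less
  obtain y where xy: "(x, y) \<in> R"
    using less.prems(8,10) by (auto elim: converse_rtranclE)
  have Rx: "R `` {x} = {y}"
    using xy less.prems(1,5) card_le_Suc0_iff_eq[of "R `` {x}"] by auto
  have "y \<noteq> x" using xy less.prems(3) by (auto dest: irreflD)
  have "x \<in> R `` {y}" using xy less.prems(2) by (auto dest: symD)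
  define R' where "R' = {(p, q) \<in> R. p \<noteq> x \<and> q \<noteq> x}"
  have R'y: "R' `` {y} = R `` {y} - {x}"
    unfolding R'_def using \<open>y \<noteq> x\<close> by blast
  have card_R'y: "card (R' `` {y}) \<le> 1"
    using R'y \<open>x \<in> R `` {y}\<close> less.prems(1) less.prems(4)[of y] by (simp add: card_Diff_singleton)
  have reach: "(y, y1) \<in> R'\<^sup>*" "(y, y2) \<in> R'\<^sup>*"
    using rtrancl_avoiding_leaf[OF Rx] less.prems(8-10) unfolding R'_def by auto
  have y_not_end: False if "card (R `` {y}) \<le> 1" "(y, z) \<in> R'\<^sup>*" "z \<noteq> y" for z
  proof -
    have "R `` {y} = {x}"
      using that(1) \<open>x \<in> R `` {y}\<close> less.prems(1) card_le_Suc0_iff_eq[of "R `` {y}"] by auto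
    then have "R' `` {y} = {}" using R'y by blast
    with that(2,3) show False by (auto elim: converse_rtranclE)
  qed
  have sub: "R' `` {p} \<subseteq> R `` {p}" for p unfolding R'_def by blast
  have card_sub: "card (R' `` {p}) \<le> card (R `` {p})" for p
    using card_mono[OF _ sub] less.prems(1) by simp
  show False
  proof (cases "y = y1 \<or> y = y2")
    case True
    then show False
      using y_not_end reach less.prems(6,7,10) by auto
  next
    case False
    show False
    proof (rule less.hyps[of R' y y1 y2])
      show "card R' < card R"
        using xy less.prems(1) unfolding R'_def by (intro psubset_card_mono) auto
      show "finite R'" using less.prems(1) unfolding R'_def by (rule rev_finite_subset) auto
      show "sym R'" "irrefl R'"
        using less.prems(2,3) unfolding R'_def sym_def irrefl_def by auto
      show "card (R' `` {p}) \<le> 2" for p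
        using card_sub[of p] less.prems(4)[of p] by linarith
      show "card (R' `` {y1}) \<le> 1" "card (R' `` {y2}) \<le> 1"
        using card_sub[of y1] card_sub[of y2] less.prems(6,7) by linarith+
      show "distinct [y, y1, y2]" using False less.prems(10) by auto
    qed (use card_R'y reach in auto)
  qed
qed

definition proper_edge_coloring :: "nat \<Rightarrow> 'a set set \<Rightarrow> ('a set \<Rightarrow> nat) \<Rightarrow> bool" where
  "proper_edge_coloring k F c \<longleftrightarrow>
     (\<forall>e\<in>F. c e < k) \<and> (\<forall>e\<in>F. \<forall>f\<in>F. e \<noteq> f \<and> e \<inter> f \<noteq> {} \<longrightarrow> c e \<noteq> c f)"

definition free_color :: "nat \<Rightarrow> 'a set set \<Rightarrow> ('a set \<Rightarrow> nat) \<Rightarrow> 'a \<Rightarrow> nat \<Rightarrow> bool" where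
  "free_color k F c v a \<longleftrightarrow> a < k \<and> (\<forall>e\<in>F. v \<in> e \<longrightarrow> c e \<noteq> a)"

lemma k_edge_colorable_iff: "k_edge_colorable k F \<longleftrightarrow> (\<exists>c. proper_edge_coloring k F c)"
  unfolding k_edge_colorable_def proper_edge_coloring_def by blast

lemma proper_edge_coloringD:
  "proper_edge_coloring k F c \<Longrightarrow> e \<in> F \<Longrightarrow> f \<in> F \<Longrightarrow> e \<noteq> f \<Longrightarrow> e \<inter> f \<noteq> {} \<Longrightarrow> c e \<noteq> c f"
  unfolding proper_edge_coloring_def by blast

lemma proper_edge_coloring_insert:
  assumes "proper_edge_coloring k F c" "free_color k F c u a" "free_color k F c v a"
  shows "proper_edge_coloring k (insert {u, v} F) (c({u, v} := a))"
  using assms unfolding proper_edge_coloring_def free_color_def by auto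

lemma proper_edge_coloring_transpose:
  assumes "proper_edge_coloring k F c" "a < k" "b < k"
    and closed: "\<And>e. e \<in> F \<Longrightarrow> c e \<in> {a, b} \<Longrightarrow> e \<inter> S \<noteq> {} \<Longrightarrow> e \<subseteq> S"
  shows "proper_edge_coloring k F (\<lambda>e. if e \<inter> S \<noteq> {} then transpose a b (c e) else c e)"
    (is "proper_edge_coloring k F ?c'")
proof -
  have unswapped: "?c' e = c e" if "e \<in> F" "e \<inter> f \<noteq> {}" "f \<inter> S = {}" for e f
  proof (cases "e \<inter> S = {}")
    case False
    have "\<not> e \<subseteq> S" using that(2,3) by blast
    then have "c e \<noteq> a" "c e \<noteq> b" using closed[OF \<open>e \<in> F\<close> _ False] by auto
    then show ?thesis by simp
  qed simp
  have "?c' e \<noteq> ?c' f" if "e \<in> F" "f \<in> F" "e \<noteq> f" "e \<inter> f \<noteq> {}" for e f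
  proof -
    have ne: "c e \<noteq> c f" using proper_edge_coloringD[OF assms(1) that] .
    have fe: "f \<inter> e \<noteq> {}" using that(4) by blast
    consider "e \<inter> S \<noteq> {}" "f \<inter> S \<noteq> {}" | "f \<inter> S = {}" | "e \<inter> S = {}" by blast
    then show ?thesis
    proof cases
      case 1
      then show ?thesis using ne transpose_eq_imp_eq[of a b "c e" "c f"] by auto
    next
      case 2
      then show ?thesis using ne unswapped[OF \<open>e \<in> F\<close> that(4)] by simp
    next
      case 3
      then show ?thesis using ne unswapped[OF \<open>f \<in> F\<close> fe] by simp
    qed
  qed
  moreover have "?c' e < k" if "e \<in> F" for e
    using assms(1-3) that unfolding proper_edge_coloring_def by (auto simp: transpose_def)
  ultimately show ?thesis unfolding proper_edge_coloring_def by blast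
qed

lemma proper_edge_coloring_inj_on_incident:
  "proper_edge_coloring k F c \<Longrightarrow> inj_on c {e \<in> F. v \<in> e}"
  unfolding proper_edge_coloring_def inj_on_def by blast

lemma degree_eq_card_incident_colors:
  "proper_edge_coloring k F c \<Longrightarrow> degree F v = card (c ` {e \<in> F. v \<in> e})"
  unfolding degree_def by (simp add: card_image proper_edge_coloring_inj_on_incident)

lemma degree_le_colors:
  assumes "proper_edge_coloring k F c"
  shows "degree F v \<le> k"
proof -
  have "c ` {e \<in> F. v \<in> e} \<subseteq> {..<k}"
    using assms unfolding proper_edge_coloring_def by auto
  from card_inj_on_le[OF proper_edge_coloring_inj_on_incident[OF assms] this]
  show ?thesis unfolding degree_def by simp
qed

lemma free_color_exists:
  assumes "proper_edge_coloring k F c" "finite F" "degree F v < k"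
  obtains a where "free_color k F c v a"
proof -
  have "card (c ` {e \<in> F. v \<in> e}) < card {..<k}"
    using assms degree_eq_card_incident_colors by fastforce
  moreover have "finite (c ` {e \<in> F. v \<in> e})" using assms(2) by simp
  ultimately have "\<not> {..<k} \<subseteq> c ` {e \<in> F. v \<in> e}"
    using card_mono leD by blast
  then show thesis
    using that unfolding free_color_def by blast
qed

lemma simple_graph_edgeE:
  assumes "simple_graph V E" "e \<in> E"
  obtains u v where "e = {u, v}" "u \<noteq> v" "u \<in> V" "v \<in> V"
  using assms unfolding simple_graph_def by blast

lemma simple_graph_edge_card: "simple_graph V E \<Longrightarrow> e \<in> E \<Longrightarrow> card e = 2"
  by (auto elim: simple_graph_edgeE)

lemma simple_graph_edge_subset: "simple_graph V E \<Longrightarrow> e \<in> E \<Longrightarrow> e \<subseteq> V"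
  by (auto elim: simple_graph_edgeE)

lemma simple_graph_finite_edges:
  assumes "simple_graph V E"
  shows "finite E"
proof (rule finite_subset[of E "Pow V"])
  show "E \<subseteq> Pow V" using simple_graph_edge_subset[OF assms] by blast
  show "finite (Pow V)" using assms unfolding simple_graph_def by simp
qed

lemma degree_eq_card_neighbours:
  assumes "simple_graph V E" "F \<subseteq> E"
  shows "degree F v = card {u. {u, v} \<in> F}"
proof -
  have "{e \<in> F. v \<in> e} = (\<lambda>u. {u, v}) ` {u. {u, v} \<in> F}"
  proof (intro equalityI subsetI)
    fix e assume e: "e \<in> {e \<in> F. v \<in> e}"
    then have "e \<in> E" using assms(2) by blast
    then obtain p q where "e = {p, q}" by (rule simple_graph_edgeE[OF assms(1)])
    then obtain u where "e = {u, v}" using e by (auto simp: insert_commute)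
    with e show "e \<in> (\<lambda>u. {u, v}) ` {u. {u, v} \<in> F}" by auto
  qed auto
  moreover have "u \<noteq> v" if "{u, v} \<in> F" for u
    using that assms simple_graph_edge_card[OF assms(1), of "{u, v}"] by auto
  then have "inj_on (\<lambda>u. {u, v}) {u. {u, v} \<in> F}"
    by (auto intro!: inj_onI simp: doubleton_eq_iff)
  ultimately show ?thesis
    unfolding degree_def by (simp add: card_image)
qed

lemma alpha_k_attained:
  assumes "finite E"
  obtains H where "H \<subseteq> E" "k_edge_colorable k H" "card H = alpha_k k E"
    "\<And>F. F \<subseteq> E \<Longrightarrow> k_edge_colorable k F \<Longrightarrow> card F \<le> card H"
proof -
  define C where "C = {card F | F. F \<subseteq> E \<and> k_edge_colorable k F}"
  have "C \<subseteq> card ` Pow E" unfolding C_def by blast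
  then have "finite C" by (rule finite_subset) (simp add: assms)
  have "k_edge_colorable k {}"
    unfolding k_edge_colorable_def by simp
  then have "C \<noteq> {}" unfolding C_def by blast
  have alpha: "alpha_k k E = Max C" unfolding alpha_k_def C_def ..
  have "alpha_k k E \<in> C"
    unfolding alpha using Max_in[OF \<open>finite C\<close> \<open>C \<noteq> {}\<close>] .
  then obtain H where "H \<subseteq> E" "k_edge_colorable k H" "card H = alpha_k k E"
    unfolding C_def by auto
  moreover have "card F \<le> card H" if "F \<subseteq> E" "k_edge_colorable k F" for F
  proof -
    have "card F \<in> C" unfolding C_def using that by blast
    then show ?thesis
      using Max_ge[OF \<open>finite C\<close>] \<open>card H = alpha_k k E\<close> unfolding alpha by simp
  qed
  ultimately show thesis by (rule that)
qed

lemma phi_set_le_phi_graph: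
  "finite V \<Longrightarrow> D \<subseteq> V \<Longrightarrow> phi_set k E D \<le> phi_graph k V E"
  unfolding phi_graph_def by (rule Max_ge) auto

locale maximum_colorable_subgraph =
  fixes V :: "'a set" and E :: "'a set set" and k :: nat
    and H :: "'a set set" and c :: "'a set \<Rightarrow> nat"
  assumes graph: "simple_graph V E"
    and subgraph: "H \<subseteq> E"
    and coloring: "proper_edge_coloring k H c"
    and maximum: "\<And>F. F \<subseteq> E \<Longrightarrow> k_edge_colorable k F \<Longrightarrow> card F \<le> card H"
begin

lemma finite_H: "finite H"
  using finite_subset[OF subgraph simple_graph_finite_edges[OF graph]] .

lemma no_common_free_color:
  assumes "{u, v} \<in> E - H" "proper_edge_coloring k H c'"
    and "free_color k H c' u a" "free_color k H c' v a"
  shows False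
proof -
  have "k_edge_colorable k (insert {u, v} H)"
    using proper_edge_coloring_insert[OF assms(2-4)] k_edge_colorable_iff by blast
  moreover have "insert {u, v} H \<subseteq> E" using assms(1) subgraph by blast
  ultimately have "card (insert {u, v} H) \<le> card H" using maximum by blast
  with finite_H assms(1) show False by simp
qed

definition kempe_rel :: "nat \<Rightarrow> nat \<Rightarrow> ('a \<times> 'a) set" where
  "kempe_rel a b = {(p, q). {p, q} \<in> H \<and> c {p, q} \<in> {a, b}}"

lemma kempe_rel_sym: "sym (kempe_rel a b)"
  unfolding kempe_rel_def sym_def by (auto simp: insert_commute)

lemma kempe_rel_irrefl: "irrefl (kempe_rel a b)"
  unfolding irrefl_def
proof (intro allI notI)
  fix p assume "(p, p) \<in> kempe_rel a b"
  then have "{p} \<in> E" using subgraph unfolding kempe_rel_def by auto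
  with simple_graph_edge_card[OF graph] show False by fastforce
qed

lemma finite_kempe_rel: "finite (kempe_rel a b)"
proof (rule finite_subset)
  show "kempe_rel a b \<subseteq> V \<times> V"
    unfolding kempe_rel_def using subgraph simple_graph_edge_subset[OF graph] by blast
  show "finite (V \<times> V)" using graph unfolding simple_graph_def by simp
qed

lemma card_kempe_rel_Image:
  "card (kempe_rel a b `` {p}) \<le> card ({a, b} \<inter> c ` {e \<in> H. p \<in> e})"
proof (rule card_inj_on_le)
  show "inj_on (\<lambda>q. c {p, q}) (kempe_rel a b `` {p})"
  proof (rule inj_onI)
    fix q q' assume q: "q \<in> kempe_rel a b `` {p}" "q' \<in> kempe_rel a b `` {p}"
      and same_color: "c {p, q} = c {p, q'}"
    have "(p, q) \<in> kempe_rel a b" "(p, q') \<in> kempe_rel a b" using q by simp_all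
    then have "q \<noteq> p" "q' \<noteq> p" using irreflD[OF kempe_rel_irrefl, of p a b] by auto
    have "{p, q} \<in> H" "{p, q'} \<in> H" using q unfolding kempe_rel_def by auto
    show "q = q'"
    proof (rule ccontr)
      assume "q \<noteq> q'"
      with \<open>q \<noteq> p\<close> \<open>q' \<noteq> p\<close> have "{p, q} \<noteq> {p, q'}" by (auto simp: doubleton_eq_iff)
      moreover have "{p, q} \<inter> {p, q'} \<noteq> {}" by simp
      ultimately show False
        using proper_edge_coloringD[OF coloring \<open>{p, q} \<in> H\<close> \<open>{p, q'} \<in> H\<close>] same_color by blast
    qed
  qed
  show "(\<lambda>q. c {p, q}) ` (kempe_rel a b `` {p}) \<subseteq> {a, b} \<inter> c ` {e \<in> H. p \<in> e}"
    unfolding kempe_rel_def by auto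
qed simp

lemma card_kempe_rel_Image_le_2: "card (kempe_rel a b `` {p}) \<le> 2"
proof -
  have "card ({a, b} \<inter> c ` {e \<in> H. p \<in> e}) \<le> card {a, b}" by (rule card_mono) auto
  also have "\<dots> \<le> 2" by (cases "a = b") auto
  finally show ?thesis by (rule order.trans[OF card_kempe_rel_Image])
qed

lemma card_kempe_rel_Image_free:
  assumes "free_color k H c p x" "x \<in> {a, b}"
  shows "card (kempe_rel a b `` {p}) \<le> 1"
proof -
  have "{a, b} \<inter> c ` {e \<in> H. p \<in> e} \<subseteq> {a, b} - {x}"
    using assms(1) unfolding free_color_def by auto
  then have "card ({a, b} \<inter> c ` {e \<in> H. p \<in> e}) \<le> card ({a, b} - {x})"
    by (intro card_mono) simp_all
  also have "\<dots> \<le> 1" using assms(2) by (cases "a = b") auto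
  finally show ?thesis by (rule order.trans[OF card_kempe_rel_Image])
qed

lemma kempe_chain_closed:
  assumes "e \<in> H" "c e \<in> {a, b}" "e \<inter> (kempe_rel a b)\<^sup>* `` {v} \<noteq> {}"
  shows "e \<subseteq> (kempe_rel a b)\<^sup>* `` {v}"
proof -
  obtain p q where e: "e = {p, q}"
    using assms(1) subgraph by (blast elim: simple_graph_edgeE[OF graph])
  then have "(p, q) \<in> kempe_rel a b" "(q, p) \<in> kempe_rel a b"
    using assms(1,2) unfolding kempe_rel_def by (auto simp: insert_commute)
  then show ?thesis using assms(3) e by (auto intro: rtrancl_into_rtrancl)
qed

text \<open>If the Kempe chain of \<open>v\<close> missed \<open>u\<close>, swapping its colours would make \<open>a\<close> free at both
  ends of the non-edge \<open>{u, v}\<close>, which could then be added to \<open>H\<close>.\<close>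
lemma kempe_chain_reaches:
  assumes "{u, v} \<in> E - H" "free_color k H c v b" "free_color k H c u a"
  shows "(v, u) \<in> (kempe_rel a b)\<^sup>*"
proof (rule ccontr)
  define S where "S = (kempe_rel a b)\<^sup>* `` {v}"
  assume "(v, u) \<notin> (kempe_rel a b)\<^sup>*"
  then have "u \<notin> S" "v \<in> S" unfolding S_def by auto
  define c' where "c' e = (if e \<inter> S \<noteq> {} then transpose a b (c e) else c e)" for e
  have closed: "e \<subseteq> S" if "e \<in> H" "c e \<in> {a, b}" "e \<inter> S \<noteq> {}" for e
    using kempe_chain_closed that unfolding S_def by blast
  have "a < k" "b < k" using assms(2,3) unfolding free_color_def by auto
  then have "proper_edge_coloring k H c'"
    unfolding c'_def using proper_edge_coloring_transpose[OF coloring _ _ closed] by blast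
  moreover have "free_color k H c' v a"
    using assms(2) \<open>a < k\<close> \<open>v \<in> S\<close> unfolding free_color_def c'_def by (auto simp: transpose_eq_iff)
  moreover have "free_color k H c' u a"
  proof -
    have "c' f = c f" if "f \<in> H" "u \<in> f" for f
    proof (cases "f \<inter> S = {}")
      case False
      then have "c f \<notin> {a, b}" using closed[OF that(1)] that(2) \<open>u \<notin> S\<close> by blast
      then show ?thesis unfolding c'_def by simp
    qed (simp add: c'_def)
    then show ?thesis using assms(3) unfolding free_color_def by simp
  qed
  ultimately show False using no_common_free_color[OF assms(1)] by blast
qed

text \<open>The \<open>a\<close>/\<open>b\<close>-Kempe chain through \<open>v\<close> would be a path with three ends \<open>v\<close>, \<open>u1\<close>, \<open>u2\<close>.\<close>
lemma free_color_unshared: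
  assumes "{u1, v} \<in> E - H" "{u2, v} \<in> E - H" "u1 \<noteq> u2"
    and "free_color k H c v b" "free_color k H c u1 a" "free_color k H c u2 a"
  shows False
proof (rule no_three_ends_in_component)
  show "finite (kempe_rel a b)" "sym (kempe_rel a b)" "irrefl (kempe_rel a b)"
    by (rule finite_kempe_rel kempe_rel_sym kempe_rel_irrefl)+
  show "card (kempe_rel a b `` {p}) \<le> 2" for p by (rule card_kempe_rel_Image_le_2)
  show "card (kempe_rel a b `` {v}) \<le> 1" "card (kempe_rel a b `` {u1}) \<le> 1"
    "card (kempe_rel a b `` {u2}) \<le> 1"
    by (rule card_kempe_rel_Image_free[OF assms(4)] card_kempe_rel_Image_free[OF assms(5)]
        card_kempe_rel_Image_free[OF assms(6)]; simp)+
  show "(v, u1) \<in> (kempe_rel a b)\<^sup>*" "(v, u2) \<in> (kempe_rel a b)\<^sup>*"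
    using kempe_chain_reaches[OF assms(1,4,5)] kempe_chain_reaches[OF assms(2,4,6)] .
  have "card {u1, v} = 2" "card {u2, v} = 2"
    using assms(1,2) subgraph simple_graph_edge_card[OF graph] by auto
  then show "distinct [v, u1, u2]" using assms(3) by auto
qed

definition deficient :: "'a set" where
  "deficient = {v \<in> V. degree H v < k}"

lemma free_color_used_at_other_end:
  assumes "{u, v} \<in> E - H" "free_color k H c u a"
  shows "a \<in> c ` {e \<in> H. v \<in> e}"
proof (rule ccontr)
  assume "a \<notin> c ` {e \<in> H. v \<in> e}"
  then have "free_color k H c v a"
    using assms(2) unfolding free_color_def by (auto intro: rev_image_eqI)
  with assms show False by (rule no_common_free_color[OF _ coloring])
qed

lemma degree_missing_edges_le_degree:
  assumes "v \<in> deficient"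
  shows "degree (induced_edges (E - H) deficient) v \<le> degree H v"
proof -
  define N where "N = {u. {u, v} \<in> induced_edges (E - H) deficient}"
  have degree_eq: "degree (induced_edges (E - H) deficient) v = card N"
    unfolding N_def by (rule degree_eq_card_neighbours[OF graph]) (auto simp: induced_edges_def)
  have N: "u \<in> deficient" "{u, v} \<in> E - H" if "u \<in> N" for u
    using that unfolding N_def induced_edges_def by auto
  obtain b where b: "free_color k H c v b"
    using free_color_exists[OF coloring finite_H] assms unfolding deficient_def by blast
  define fc where "fc u = (SOME a. free_color k H c u a)" for u
  have fc: "free_color k H c u (fc u)" if "u \<in> N" for u
  proof -
    have "degree H u < k" using N(1)[OF that] unfolding deficient_def by simp
    then obtain a where "free_color k H c u a" by (rule free_color_exists[OF coloring finite_H])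
    then show ?thesis unfolding fc_def by (rule someI)
  qed
  have "inj_on fc N"
  proof (rule inj_onI)
    fix u1 u2 assume u: "u1 \<in> N" "u2 \<in> N" and same_color: "fc u1 = fc u2"
    show "u1 = u2"
    proof (rule ccontr)
      assume "u1 \<noteq> u2"
      with N(2)[OF u(1)] N(2)[OF u(2)] show False
        using free_color_unshared[OF _ _ _ b fc[OF u(1)]] fc[OF u(2)] same_color by metis
    qed
  qed
  moreover have "fc ` N \<subseteq> c ` {e \<in> H. v \<in> e}"
    using free_color_used_at_other_end[OF N(2) fc] by blast
  ultimately have "card N \<le> card (c ` {e \<in> H. v \<in> e})"
    using finite_H by (intro card_inj_on_le) auto
  then show ?thesis
    using degree_eq degree_eq_card_incident_colors[OF coloring] by simp
qed

lemma card_induced_edges_deficient: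
  "k * card V + card (induced_edges E deficient) \<le> 2 * card H + k * card deficient"
proof -
  let ?D = deficient and ?M = "induced_edges (E - H) deficient"
  have "finite V" using graph unfolding simple_graph_def by simp
  have "?D \<subseteq> V" unfolding deficient_def by blast
  then have "finite ?D" using \<open>finite V\<close> by (rule finite_subset)
  have edges: "card e = 2 \<and> e \<subseteq> V" if "e \<in> E" for e
    using that simple_graph_edge_card[OF graph] simple_graph_edge_subset[OF graph] by blast
  have "induced_edges E ?D = induced_edges H ?D \<union> ?M"
    using subgraph unfolding induced_edges_def by blast
  moreover have "finite (induced_edges H ?D)" "finite ?M"
    using finite_H simple_graph_finite_edges[OF graph] unfolding induced_edges_def by simp_all
  moreover have "induced_edges H ?D \<inter> ?M = {}"
    unfolding induced_edges_def by blast
  ultimately have card_split: "card (induced_edges E ?D) = card (induced_edges H ?D) + card ?M"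
    by (simp add: card_Un_disjoint)
  have "2 * card (induced_edges H ?D) = (\<Sum>v\<in>?D. degree (induced_edges H ?D) v)"
    using edges subgraph by (intro sum_degree[symmetric] \<open>finite ?D\<close>) (auto simp: induced_edges_def)
  also have "\<dots> \<le> (\<Sum>v\<in>?D. degree H v)"
    by (intro sum_mono degree_mono finite_H) (auto simp: induced_edges_def)
  finally have H_inside: "2 * card (induced_edges H ?D) \<le> (\<Sum>v\<in>?D. degree H v)" .
  have "2 * card ?M = (\<Sum>v\<in>?D. degree ?M v)"
    using edges by (intro sum_degree[symmetric] \<open>finite ?D\<close>) (auto simp: induced_edges_def)
  also have "\<dots> \<le> (\<Sum>v\<in>?D. degree H v)"
    by (intro sum_mono degree_missing_edges_le_degree)
  finally have M_inside: "2 * card ?M \<le> (\<Sum>v\<in>?D. degree H v)" .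
  have "degree H v = k" if "v \<in> V - ?D" for v
    using that degree_le_colors[OF coloring, of v] unfolding deficient_def by simp
  then have "(\<Sum>v\<in>V - ?D. degree H v) = k * card (V - ?D)" by simp
  moreover have "2 * card H = (\<Sum>v\<in>V. degree H v)"
    using edges subgraph by (intro sum_degree[symmetric] \<open>finite V\<close>) auto
  moreover have "(\<Sum>v\<in>V. degree H v) = (\<Sum>v\<in>V - ?D. degree H v) + (\<Sum>v\<in>?D. degree H v)"
    using sum.subset_diff[OF \<open>?D \<subseteq> V\<close> \<open>finite V\<close>] by simp
  moreover have "card V = card (V - ?D) + card ?D"
    using card_Diff_subset[OF \<open>finite ?D\<close> \<open>?D \<subseteq> V\<close>] card_mono[OF \<open>finite V\<close> \<open>?D \<subseteq> V\<close>] by simp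
  ultimately show ?thesis
    using card_split H_inside M_inside by (simp add: algebra_simps)
qed

end

theorem mainTheorem8:
  fixes V :: "'a set" and E :: "'a set set" and k :: nat
  assumes "simple_graph V E" and "k \<ge> 1"
  shows "2 * int (alpha_k k E) \<ge> int k * int (card V) - phi_graph k V E"
proof -
  obtain H where H: "H \<subseteq> E" "k_edge_colorable k H" "card H = alpha_k k E"
    "\<And>F. F \<subseteq> E \<Longrightarrow> k_edge_colorable k F \<Longrightarrow> card F \<le> card H"
    using alpha_k_attained[OF simple_graph_finite_edges[OF assms(1)], where k = k] by blast
  obtain c where "proper_edge_coloring k H c"
    using H(2) k_edge_colorable_iff by blast
  then interpret maximum_colorable_subgraph V E k H c
    using assms(1) H(1,4) by unfold_locales
  have "finite V" using assms(1) unfolding simple_graph_def by simp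
  moreover have "deficient \<subseteq> V" unfolding deficient_def by blast
  ultimately have "phi_set k E deficient \<le> phi_graph k V E"
    by (rule phi_set_le_phi_graph)
  moreover have "int k * int (card V) + int (card (induced_edges E deficient))
      \<le> 2 * int (card H) + int k * int (card deficient)"
    using of_nat_mono[OF card_induced_edges_deficient, where 'a = int] by simp
  ultimately show ?thesis
    using H(3) unfolding phi_set_def by linarith
qed

end
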